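(* Let $k\ge 2$ and $i\in\{1,\ldots,k-1\}$. If $\binom{k}{i}$ and $\binom{k-1}{i}$ are both odd, then $J(2k,k,i)$ does not admit perfect state transfer.
   Context: $J(2k,k,i)$ is the graph on the $k$-subsets of $\{1,\ldots,2k\}$ with $A\sim B$ iff $|A\cap B|=i$. For a simple graph $X$ with adjacency matrix $A$, let $\mathcal{H}_X(t)=e^{itA}$. $X$ admits perfect state transfer (PST) if $|\mathcal{H}_X(\tau)_{u,v}|=1$ for some vertices $u\ne v$ and some $\tau>0$. *)

theory Defs
  imports Complex_Main
begin

text \<open>A simple graph is given by a finite vertex set V and an adjacency
  matrix M :: 'a => 'a => complex (entries indexed by vertices of V).
  Matrix powers are computed entrywise over V.\<close>

fun mat_pow :: "'a set \<Rightarrow> ('a \<Rightarrow> 'a \<Rightarrow> complex) \<Rightarrow> nat \<Rightarrow> 'a \<Rightarrow> 'a \<Rightarrow> complex" where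
  "mat_pow V M 0 u v = (if u = v then 1 else 0)"
| "mat_pow V M (Suc n) u v = (\<Sum>w\<in>V. M u w * mat_pow V M n w v)"

definition transition :: "'a set \<Rightarrow> ('a \<Rightarrow> 'a \<Rightarrow> complex) \<Rightarrow> real \<Rightarrow> 'a \<Rightarrow> 'a \<Rightarrow> complex" where
  "transition V M t u v = (\<Sum>n. (\<i> * complex_of_real t) ^ n / fact n * mat_pow V M n u v)"

definition admits_PST :: "'a set \<Rightarrow> ('a \<Rightarrow> 'a \<Rightarrow> complex) \<Rightarrow> bool" where
  "admits_PST V M \<longleftrightarrow>
     (\<exists>u\<in>V. \<exists>v\<in>V. u \<noteq> v \<and> (\<exists>\<tau>>0. cmod (transition V M \<tau> u v) = 1))"

definition J_vertices :: "nat \<Rightarrow> nat \<Rightarrow> nat set set" where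
  "J_vertices n k = {A. A \<subseteq> {1..n} \<and> card A = k}"

definition J_adj :: "nat \<Rightarrow> nat set \<Rightarrow> nat set \<Rightarrow> complex" where
  "J_adj i A B = (if card (A \<inter> B) = i then 1 else 0)"

end

theory Submission
  imports Defs "HOL-Combinatorics.Transposition"
begin

text \<open>Suppose \<open>H(\<tau>)\<close> transfers \<open>u\<close> perfectly to \<open>v\<close>. Since \<open>H(\<tau>)\<close> is unitary, its row \<open>u\<close> is
  supported on \<open>v\<close>, so \<open>H(\<tau>)\<^sub>u\<^sub>v x\<^sub>v = exp(i\<tau>\<theta>) x\<^sub>u\<close> for every eigenvector \<open>x\<close> with eigenvalue \<open>\<theta>\<close>.
  For \<open>j\<close> disjoint pairs \<open>(a\<^sub>l, b\<^sub>l)\<close> with \<open>a\<^sub>l \<in> u\<close> and \<open>b\<^sub>l \<notin> u\<close>, the vector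
  \<open>x(C) = \<Prod>\<^sub>l ([a\<^sub>l \<in> C] - [b\<^sub>l \<in> C])\<close> is such an eigenvector, whose eigenvalue \<open>E\<^sub>j\<close> is an
  alternating sum of products of binomial coefficients. The case \<open>j = 1\<close> forces \<open>v\<close> to be the
  complement of \<open>u\<close>, and then \<open>exp(i\<tau>(E\<^sub>0 - E\<^sub>j)) = (-1)\<^sup>j\<close> for every \<open>j \<le> k\<close>. Since
  \<open>E\<^sub>0 - E\<^sub>1 = 2 C(k,i) C(k-1,i)\<close> is twice an odd number, \<open>4\<close> divides \<open>E\<^sub>0 - E\<^sub>j\<close> exactly when
  \<open>j\<close> is even. Lucas' theorem yields a \<open>j \<ge> 2\<close> with \<open>E\<^sub>0 - E\<^sub>j \<equiv> 1 + (-1)\<^sup>j (mod 4)\<close>,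
  a contradiction.\<close>

section \<open>Continuous-time quantum walks\<close>

text \<open>The bound on the entries only serves to dominate the exponential series.\<close>

locale real_sym_matrix =
  fixes V :: "'a set" and M :: "'a \<Rightarrow> 'a \<Rightarrow> complex"
  assumes finite_V: "finite V"
    and sym: "\<And>u w. M u w = M w u"
    and real: "\<And>u w. cnj (M u w) = M u w"
    and norm_le_1: "\<And>u w. cmod (M u w) \<le> 1"
begin

abbreviation P where "P \<equiv> mat_pow V M"

abbreviation H where "H \<equiv> transition V M"

lemma mat_pow_add: "u \<in> V \<Longrightarrow> P (m + n) u v = (\<Sum>w\<in>V. P m u w * P n w v)"
proof (induction m arbitrary: u)
  case 0
  have "(\<Sum>w\<in>V. P 0 u w * P n w v) = (\<Sum>w\<in>V. if u = w then P n w v else 0)"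
    by (rule sum.cong) auto
  with 0 show ?case by (simp add: finite_V)
next
  case (Suc m)
  have "P (Suc m + n) u v = (\<Sum>y\<in>V. M u y * (\<Sum>w\<in>V. P m y w * P n w v))"
    by (auto simp: Suc.IH intro: sum.cong)
  also have "\<dots> = (\<Sum>w\<in>V. \<Sum>y\<in>V. M u y * P m y w * P n w v)"
    by (subst sum.swap) (simp add: sum_distrib_left mult.assoc)
  also have "\<dots> = (\<Sum>w\<in>V. P (Suc m) u w * P n w v)"
    by (simp add: sum_distrib_right)
  finally show ?case .
qed

lemma mat_pow_1: "v \<in> V \<Longrightarrow> P 1 w v = M w v"
  by (simp add: finite_V if_distrib[of "\<lambda>x. _ * x"] cong: if_cong)

lemma mat_pow_commute: "u \<in> V \<Longrightarrow> v \<in> V \<Longrightarrow> P n u v = P n v u"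
proof (induction n arbitrary: u v)
  case 0
  then show ?case by simp
next
  case (Suc n)
  have "P (Suc n) u v = (\<Sum>w\<in>V. P n u w * P 1 w v)"
    using mat_pow_add[OF Suc.prems(1), of n 1] by simp
  also have "\<dots> = (\<Sum>w\<in>V. P n u w * M w v)"
    by (rule sum.cong[OF refl]) (simp only: mat_pow_1[OF Suc.prems(2)])
  also have "\<dots> = (\<Sum>w\<in>V. M v w * P n w u)"
    by (rule sum.cong) (auto simp: Suc.prems Suc.IH sym)
  finally show ?case by simp
qed

lemma cnj_mat_pow: "cnj (P n u v) = P n u v"
  by (induction n arbitrary: u) (auto simp: real)

lemma norm_mat_pow_le: "cmod (P n u v) \<le> real (card V) ^ n"
proof (induction n arbitrary: u)
  case 0
  then show ?case by simp
next
  case (Suc n)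
  have "cmod (P (Suc n) u v) \<le> (\<Sum>w\<in>V. cmod (M u w * P n w v))"
    by (simp add: norm_sum)
  also have "\<dots> = (\<Sum>w\<in>V. cmod (M u w) * cmod (P n w v))"
    by (simp add: norm_mult)
  also have "\<dots> \<le> (\<Sum>w\<in>V. 1 * real (card V) ^ n)"
    by (intro sum_mono mult_mono norm_le_1 Suc.IH) simp_all
  finally show ?case by simp
qed

definition exp_coeff :: "real \<Rightarrow> nat \<Rightarrow> complex" where
  "exp_coeff t n = (\<i> * complex_of_real t) ^ n / fact n"

lemma transition_eq_suminf: "H t u v = (\<Sum>n. exp_coeff t n * P n u v)"
  by (simp add: transition_def exp_coeff_def)

lemma summable_norm_transition: "summable (\<lambda>n. cmod (exp_coeff t n * P n u v))"
proof (rule summable_comparison_test')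
  show "summable (\<lambda>n. inverse (fact n) * (\<bar>t\<bar> * real (card V)) ^ n)"
    by (rule summable_exp)
  fix n :: nat
  have "cmod (exp_coeff t n * P n u v) = \<bar>t\<bar> ^ n / fact n * cmod (P n u v)"
    by (simp add: exp_coeff_def norm_mult norm_divide norm_power)
  also have "\<dots> \<le> \<bar>t\<bar> ^ n / fact n * real (card V) ^ n"
    by (rule mult_left_mono) (auto simp: norm_mat_pow_le)
  finally show "norm (cmod (exp_coeff t n * P n u v)) \<le> inverse (fact n) * (\<bar>t\<bar> * real (card V)) ^ n"
    by (simp add: power_mult_distrib field_simps)
qed

lemma summable_transition: "summable (\<lambda>n. exp_coeff t n * P n u v)"
  by (rule summable_norm_cancel[OF summable_norm_transition])

lemma exp_coeff_add: "(\<Sum>m\<le>N. exp_coeff s m * exp_coeff t (N - m)) = exp_coeff (s + t) N"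
proof -
  have "exp_coeff (s + t) N = (\<i> * complex_of_real s + \<i> * complex_of_real t) ^ N / fact N"
    by (simp add: exp_coeff_def distrib_left)
  also have "\<dots> = (\<Sum>m\<le>N. of_nat (N choose m) * (\<i> * complex_of_real s) ^ m
                    * (\<i> * complex_of_real t) ^ (N - m)) / fact N"
    by (simp add: binomial_ring)
  also have "\<dots> = (\<Sum>m\<le>N. exp_coeff s m * exp_coeff t (N - m))"
    unfolding sum_divide_distrib by (rule sum.cong) (auto simp: binomial_fact exp_coeff_def)
  finally show ?thesis by simp
qed

lemma transition_add:
  assumes u: "u \<in> V"
  shows "(\<Sum>w\<in>V. H s u w * H t w v) = H (s + t) u v"
proof -
  let ?c = "\<lambda>N w m. (exp_coeff s m * P m u w) * (exp_coeff t (N - m) * P (N - m) w v)"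
  have "(\<Sum>w\<in>V. H s u w * H t w v) = (\<Sum>w\<in>V. \<Sum>N. \<Sum>m\<le>N. ?c N w m)"
    by (rule sum.cong) (auto simp: transition_eq_suminf Cauchy_product summable_norm_transition)
  also have "\<dots> = (\<Sum>N. \<Sum>w\<in>V. \<Sum>m\<le>N. ?c N w m)"
    by (rule suminf_sum[symmetric]) (rule summable_Cauchy_product; rule summable_norm_transition)
  also have "\<dots> = (\<Sum>N. exp_coeff (s + t) N * P N u v)"
  proof (rule arg_cong[where f = suminf], rule ext)
    fix N
    have "(\<Sum>w\<in>V. \<Sum>m\<le>N. ?c N w m)
        = (\<Sum>m\<le>N. exp_coeff s m * exp_coeff t (N - m) * (\<Sum>w\<in>V. P m u w * P (N - m) w v))"
      by (subst sum.swap) (simp add: sum_distrib_left mult_ac)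
    also have "\<dots> = (\<Sum>m\<le>N. exp_coeff s m * exp_coeff t (N - m) * P N u v)"
      by (rule sum.cong) (auto simp: mat_pow_add[OF u, symmetric])
    finally show "(\<Sum>w\<in>V. \<Sum>m\<le>N. ?c N w m) = exp_coeff (s + t) N * P N u v"
      by (simp add: sum_distrib_right[symmetric] exp_coeff_add)
  qed
  finally show ?thesis by (simp add: transition_eq_suminf)
qed

lemma cnj_transition: "cnj (H t u v) = H (- t) u v"
proof -
  have "(\<lambda>n. exp_coeff t n * P n u v) sums H t u v"
    using summable_transition by (simp add: transition_eq_suminf summable_sums)
  then have "(\<lambda>n. cnj (exp_coeff t n * P n u v)) sums cnj (H t u v)"
    by (rule sums_cnj[THEN iffD2])
  moreover have "(\<lambda>n. cnj (exp_coeff t n * P n u v)) = (\<lambda>n. exp_coeff (- t) n * P n u v)"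
    by (auto simp: exp_coeff_def cnj_mat_pow fun_eq_iff)
  ultimately show ?thesis by (simp add: transition_eq_suminf sums_iff)
qed

lemma transition_commute: "u \<in> V \<Longrightarrow> v \<in> V \<Longrightarrow> H t u v = H t v u"
  by (simp add: transition_eq_suminf mat_pow_commute)

lemma transition_0_diag: "H 0 u u = 1"
proof -
  have "(\<lambda>n. exp_coeff 0 n * P n u u) = (\<lambda>n. if n = 0 then 1 else 0)"
    by (auto simp: exp_coeff_def fun_eq_iff)
  then show ?thesis
    using sums_single[of 0 "\<lambda>_. 1::complex"] by (simp add: transition_eq_suminf sums_iff)
qed

lemma sum_norm_transition_row: "u \<in> V \<Longrightarrow> (\<Sum>w\<in>V. (cmod (H t u w))\<^sup>2) = 1"
proof -
  assume u: "u \<in> V"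
  have "complex_of_real (\<Sum>w\<in>V. (cmod (H t u w))\<^sup>2) = (\<Sum>w\<in>V. H t u w * H (- t) w u)"
    unfolding of_real_sum complex_norm_square
    by (rule sum.cong) (auto simp: cnj_transition transition_commute u)
  also have "\<dots> = 1"
    by (simp add: transition_add u transition_0_diag)
  finally show ?thesis
    by (metis of_real_eq_1_iff)
qed

lemma transition_row_concentrated:
  assumes u: "u \<in> V" and v: "v \<in> V" and unit: "cmod (H t u v) = 1"
    and w: "w \<in> V" "w \<noteq> v"
  shows "H t u w = 0"
proof -
  have "(\<Sum>w\<in>V - {v}. (cmod (H t u w))\<^sup>2) = 0"
    using sum_norm_transition_row[OF u, of t] unit by (simp add: sum.remove[OF finite_V v])
  then show ?thesis
    using w by (subst (asm) sum_nonneg_eq_0_iff) (auto simp: finite_V)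
qed

context
  fixes x :: "'a \<Rightarrow> complex" and \<theta> :: complex
  assumes eigen: "\<And>y. y \<in> V \<Longrightarrow> (\<Sum>w\<in>V. M y w * x w) = \<theta> * x y"
begin

lemma mat_pow_eigenvector: "u \<in> V \<Longrightarrow> (\<Sum>w\<in>V. P n u w * x w) = \<theta> ^ n * x u"
proof (induction n arbitrary: u)
  case 0
  have "(\<Sum>w\<in>V. P 0 u w * x w) = (\<Sum>w\<in>V. if u = w then x w else 0)"
    by (rule sum.cong) auto
  with 0 show ?case by (simp add: finite_V)
next
  case (Suc n)
  have "(\<Sum>w\<in>V. P (Suc n) u w * x w) = (\<Sum>y\<in>V. M u y * (\<Sum>w\<in>V. P n y w * x w))"
    by (simp add: sum_distrib_left sum_distrib_right mult.assoc) (rule sum.swap)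
  also have "\<dots> = (\<Sum>y\<in>V. \<theta> ^ n * (M u y * x y))"
    by (rule sum.cong) (auto simp: Suc.IH)
  finally show ?case
    by (simp add: sum_distrib_left[symmetric] eigen Suc.prems)
qed

lemma transition_eigenvector:
  assumes u: "u \<in> V"
  shows "(\<Sum>w\<in>V. H t u w * x w) = exp (\<i> * complex_of_real t * \<theta>) * x u"
proof -
  have "(\<Sum>w\<in>V. H t u w * x w) = (\<Sum>w\<in>V. \<Sum>n. exp_coeff t n * P n u w * x w)"
    by (rule sum.cong) (auto simp: transition_eq_suminf suminf_mult2[OF summable_transition])
  also have "\<dots> = (\<Sum>n. \<Sum>w\<in>V. exp_coeff t n * P n u w * x w)"
    by (rule suminf_sum[symmetric]) (rule summable_mult2, rule summable_transition)
  also have "\<dots> = (\<Sum>n. (\<i> * complex_of_real t * \<theta>) ^ n /\<^sub>R fact n * x u)"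
  proof (rule arg_cong[where f = suminf], rule ext)
    fix n
    have "(\<Sum>w\<in>V. exp_coeff t n * P n u w * x w) = exp_coeff t n * (\<Sum>w\<in>V. P n u w * x w)"
      by (simp add: sum_distrib_left mult.assoc)
    also have "\<dots> = exp_coeff t n * \<theta> ^ n * x u"
      by (simp add: mat_pow_eigenvector[OF u])
    finally show "(\<Sum>w\<in>V. exp_coeff t n * P n u w * x w) = (\<i> * complex_of_real t * \<theta>) ^ n /\<^sub>R fact n * x u"
      by (simp add: exp_coeff_def scaleR_conv_of_real power_mult_distrib field_simps)
  qed
  also have "\<dots> = exp (\<i> * complex_of_real t * \<theta>) * x u"
    by (rule sums_unique[symmetric], rule sums_mult2, rule exp_converges)
  finally show ?thesis .
qed

lemma perfect_transfer_eigenvector: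
  assumes u: "u \<in> V" and v: "v \<in> V" and unit: "cmod (H t u v) = 1"
  shows "H t u v * x v = exp (\<i> * complex_of_real t * \<theta>) * x u"
proof -
  have "(\<Sum>w\<in>V. H t u w * x w) = H t u v * x v"
    using transition_row_concentrated[OF u v unit] by (simp add: sum.remove[OF finite_V v])
  then show ?thesis
    using transition_eigenvector[OF u] by simp
qed

end

end

section \<open>Binomial coefficients modulo 2\<close>

lemma binomial_Suc_Suc_twice:
  "Suc (Suc n) choose Suc (Suc m) = (n choose m) + 2 * (n choose Suc m) + (n choose Suc (Suc m))"
  by simp

lemma even_binomial_double_odd: "even ((2 * n) choose (2 * m + 1))"
proof (induction n arbitrary: m)
  case 0
  then show ?case by simp
next
  case (Suc n)
  show ?case
  proof (cases m)
    case 0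
    then show ?thesis by simp
  next
    case (Suc m')
    have "2 * Suc n choose (2 * m + 1)
        = (2 * n choose (2 * m' + 1)) + 2 * (2 * n choose Suc (2 * m' + 1)) + (2 * n choose (2 * (m' + 1) + 1))"
      using Suc binomial_Suc_Suc_twice[of "2 * n" "2 * m' + 1"] by simp
    then show ?thesis
      using Suc.IH[of m'] Suc.IH[of "m' + 1"] by simp
  qed
qed

lemma odd_binomial_double_iff: "odd ((2 * n) choose (2 * m)) \<longleftrightarrow> odd (n choose m)"
proof (induction n arbitrary: m)
  case 0
  then show ?case by (cases m) simp_all
next
  case (Suc n)
  show ?case
  proof (cases m)
    case 0
    then show ?thesis by simp
  next
    case (Suc m')
    have "2 * Suc n choose (2 * m)
        = (2 * n choose (2 * m')) + 2 * (2 * n choose Suc (2 * m')) + (2 * n choose (2 * (m' + 1)))"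
      using Suc binomial_Suc_Suc_twice[of "2 * n" "2 * m'"] by simp
    moreover have "Suc n choose m = (n choose m') + (n choose (m' + 1))"
      using Suc by simp
    ultimately show ?thesis
      using Suc.IH[of m'] Suc.IH[of "m' + 1"] by simp
  qed
qed

lemma odd_binomial_digit_iff:
  assumes "e < 2" "f < 2"
  shows "odd ((2 * n + e) choose (2 * m + f)) \<longleftrightarrow> odd (n choose m) \<and> odd (e choose f)"
proof -
  consider "e = 0" "f = 0" | "e = 0" "f = 1" | "e = 1" "f = 0" | "e = 1" "f = 1"
    using assms by linarith
  then show ?thesis
  proof cases
    case 1
    then show ?thesis by (simp add: odd_binomial_double_iff)
  next
    case 2
    then show ?thesis using even_binomial_double_odd[of n m] by simp
  next
    case 3
    show ?thesis
    proof (cases m)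
      case 0
      then show ?thesis using 3 by simp
    next
      case (Suc m')
      then have "(2 * n + 1) choose (2 * m) = (2 * n choose (2 * m' + 1)) + (2 * n choose (2 * m))"
        by (simp add: numeral_2_eq_2)
      then show ?thesis
        using 3 even_binomial_double_odd[of n m'] odd_binomial_double_iff[of n m] by simp
    qed
  next
    case 4
    have "(2 * n + 1) choose (2 * m + 1) = (2 * n choose (2 * m)) + (2 * n choose (2 * m + 1))"
      by simp
    then show ?thesis
      using 4 even_binomial_double_odd[of n m] odd_binomial_double_iff[of n m] by simp
  qed
qed

lemma odd_binomial_pow2_split_iff:
  "b < 2 ^ s \<Longrightarrow> d < 2 ^ s \<Longrightarrow>
    odd ((2 ^ s * a + b) choose (2 ^ s * c + d)) \<longleftrightarrow> odd (a choose c) \<and> odd (b choose d)"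
proof (induction s arbitrary: b d)
  case 0
  then show ?case by simp
next
  case (Suc s)
  have high: "b div 2 < 2 ^ s" "d div 2 < 2 ^ s"
    using Suc.prems by auto
  have digits: "2 ^ Suc s * a + b = 2 * (2 ^ s * a + b div 2) + b mod 2"
    "2 ^ Suc s * c + d = 2 * (2 ^ s * c + d div 2) + d mod 2"
    by simp_all
  have "odd ((2 ^ Suc s * a + b) choose (2 ^ Suc s * c + d)) \<longleftrightarrow>
      odd ((2 ^ s * a + b div 2) choose (2 ^ s * c + d div 2)) \<and> odd (b mod 2 choose d mod 2)"
    unfolding digits by (rule odd_binomial_digit_iff) simp_all
  moreover have "odd (b choose d) \<longleftrightarrow> odd (b div 2 choose d div 2) \<and> odd (b mod 2 choose d mod 2)"
    using odd_binomial_digit_iff[of "b mod 2" "d mod 2" "b div 2" "d div 2"] by simp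
  ultimately show ?case
    using Suc.IH[OF high] by blast
qed

lemma odd_binomial_pow2_minus_1: "d < 2 ^ s \<Longrightarrow> odd ((2 ^ s - 1) choose d)"
proof (induction s arbitrary: d)
  case 0
  then show ?case by simp
next
  case (Suc s)
  have "(2::nat) ^ Suc s - 1 = 2 * (2 ^ s - 1) + 1"
    by (induction s) auto
  moreover have "d = 2 * (d div 2) + d mod 2" "d div 2 < 2 ^ s"
    using Suc.prems by auto
  ultimately show ?case
    using odd_binomial_digit_iff[of 1 "d mod 2" "2 ^ s - 1" "d div 2"] Suc.IH
    by (cases "d mod 2 = 0") auto
qed

lemma odd_binomial_block_iff:
  "d < 2 ^ s \<Longrightarrow> odd ((2 ^ s * a + (2 ^ s - 1)) choose (2 ^ s * c + d)) \<longleftrightarrow> odd (a choose c)"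
  using odd_binomial_pow2_split_iff[of "2 ^ s - 1" s d a c] odd_binomial_pow2_minus_1[of d s]
  by simp

lemma exists_pow2_times_odd: "n \<ge> (1::nat) \<Longrightarrow> \<exists>s q. n = 2 ^ s * (2 * q + 1)"
proof (induction n rule: less_induct)
  case (less n)
  show ?case
  proof (cases "odd n")
    case True
    then have "n = 2 ^ 0 * (2 * (n div 2) + 1)" by simp
    then show ?thesis by blast
  next
    case False
    then obtain m where m: "n = 2 * m" by blast
    with less.prems have "m \<ge> 1" "m < n" by auto
    then obtain s q where "m = 2 ^ s * (2 * q + 1)" using less.IH by blast
    with m have "n = 2 ^ Suc s * (2 * q + 1)" by simp
    then show ?thesis by blast
  qed
qed

lemma odd_binomials_block_form:
  assumes i: "i = 2 ^ s * (2 * q + 1)" and odd: "odd (k choose i)" "odd ((k - 1) choose i)"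
  obtains K r where "k = 2 ^ s * (2 * K + 1) + r" "1 \<le> r" "r < 2 ^ s" "odd (K choose q)"
proof -
  define p :: nat where "p = 2 ^ s"
  have p: "p \<ge> 1" "p - 1 < p" "0 < p"
    by (simp_all add: p_def)
  define m where "m = k div p"
  define r where "r = k mod p"
  have k: "k = p * m + r" and r: "r < p"
    using p by (simp_all add: m_def r_def)
  have i': "i = p * (2 * q + 1) + 0"
    using i by (simp add: p_def)
  note split_iff = odd_binomial_pow2_split_iff[of _ s _ _, folded p_def]
  have "odd (m choose (2 * q + 1))"
    using odd(1) split_iff[OF r, of 0 m "2 * q + 1"] p unfolding k i' by simp
  then have "odd (m div 2 choose q) \<and> odd (m mod 2 choose 1)"
    using odd_binomial_digit_iff[of "m mod 2" 1 "m div 2" q] by simp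
  then have K_odd: "odd (m div 2 choose q)" and "m mod 2 = 1"
    by (auto simp: mod_2_eq_odd split: if_splits)
  define K where "K = m div 2"
  have "m = 2 * K + 1"
    using \<open>m mod 2 = 1\<close> div_mult_mod_eq[of m 2] unfolding K_def by linarith
  then have k': "k = p * (2 * K + 1) + r"
    using k by simp
  have "r \<ge> 1"
  proof (rule ccontr)
    assume "\<not> r \<ge> 1"
    then have "k - 1 = p * (2 * K) + (p - 1)"
      using k' p by (simp add: algebra_simps)
    then show False
      using odd(2) odd_binomial_block_iff[of 0 s "2 * K" "2 * q + 1", folded p_def] p
        even_binomial_double_odd[of K q] i' by simp
  qed
  then show ?thesis
    using that[of K r] k' r K_odd by (simp add: p_def K_def)
qed

text \<open>With \<open>p = 2\<^sup>s\<close> and \<open>k = p (2K + 1) + r\<close> as above, \<open>j = r + 1\<close> gives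
  \<open>k - j = p (2K) + (p - 1)\<close>, whose binomial coefficients are read off modulo 2 by Lucas' theorem.\<close>

lemma binomial_parity_witness:
  assumes "1 \<le> i" "i < k" "odd (k choose i)" "odd ((k - 1) choose i)"
  shows "\<exists>j. 2 \<le> j \<and> j \<le> i \<and> j - 1 \<le> k - i \<and> even ((k - j) choose i) \<and>
           (\<forall>t. 1 \<le> t \<and> t \<le> j \<longrightarrow> odd ((k - j) choose (i - t)))"
proof -
  obtain s q where i: "i = 2 ^ s * (2 * q + 1)"
    using exists_pow2_times_odd assms(1) by blast
  obtain K r where k: "k = 2 ^ s * (2 * K + 1) + r" and r: "1 \<le> r" "r < 2 ^ s"
    and K: "odd (K choose q)"
    using odd_binomials_block_form[OF i assms(3,4)] by blast
  define p :: nat where "p = 2 ^ s"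
  define j where "j = r + 1"
  note block_iff = odd_binomial_block_iff[of _ s, folded p_def]
  have p: "1 \<le> p" "0 < p"
    by (simp_all add: p_def)
  have kj: "k - j = p * (2 * K) + (p - 1)"
    using k r by (simp add: j_def p_def algebra_simps)
  have "q \<le> K"
    using K by (metis binomial_eq_0 even_zero not_le)
  then have "p * (2 * q + 1) \<le> p * (2 * K + 1)" "p \<le> p * (2 * q + 1)"
    by simp_all
  then have "j \<le> i" "j - 1 \<le> k - i"
    using i k r unfolding j_def p_def by linarith+
  moreover have "even ((k - j) choose i)"
    using block_iff[of 0 "2 * K" "2 * q + 1"] even_binomial_double_odd[of K q] i p kj
    by (simp add: p_def)
  moreover have "odd ((k - j) choose (i - t))" if "1 \<le> t" "t \<le> j" for t
  proof -
    have "i - t = p * (2 * q) + (p - t)"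
      using i that r by (simp add: j_def p_def algebra_simps)
    then show ?thesis
      using block_iff[of "p - t" "2 * K" "2 * q"] that p odd_binomial_double_iff[of K q] K kj by simp
  qed
  moreover have "2 \<le> j"
    using r by (simp add: j_def)
  ultimately show ?thesis
    by blast
qed

section \<open>Eigenvalues of \<open>J(2k, k, i)\<close>\<close>

text \<open>\<open>pattern_count k i j t\<close> counts the \<open>k\<close>-subsets \<open>C\<close> of a \<open>2k\<close>-set, meeting a fixed
  \<open>k\<close>-set \<open>B\<close> in \<open>i\<close> points, whose trace on \<open>j\<close> points \<open>a\<^sub>l \<in> B\<close> and \<open>j\<close> points \<open>b\<^sub>l \<notin> B\<close>
  is a prescribed set containing \<open>t\<close> of the \<open>a\<^sub>l\<close> and \<open>j - t\<close> of the \<open>b\<^sub>l\<close>.\<close>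

definition pattern_count :: "nat \<Rightarrow> nat \<Rightarrow> nat \<Rightarrow> nat \<Rightarrow> int" where
  "pattern_count k i j t =
     (if t \<le> i \<and> j - t \<le> k - i
      then int ((k - j) choose (i - t)) * int ((k - j) choose ((k - i) - (j - t))) else 0)"

definition J_eigenvalue :: "nat \<Rightarrow> nat \<Rightarrow> nat \<Rightarrow> int" where
  "J_eigenvalue k i j = (\<Sum>t\<le>j. (-1) ^ (j - t) * int (j choose t) * pattern_count k i j t)"

lemma pattern_count_eq_square:
  assumes "t \<le> i" "t \<le> j" "j - t \<le> k - i" "i \<le> k"
  shows "pattern_count k i j t = int ((k - j) choose (i - t)) ^ 2"
proof -
  have "(k - i) - (j - t) = (k - j) - (i - t)"
    using assms by arith
  then have "(k - j) choose ((k - i) - (j - t)) = (k - j) choose ((k - j) - (i - t))"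
    by simp
  also have "\<dots> = (k - j) choose (i - t)"
    using assms by (intro binomial_symmetric[symmetric]) linarith
  finally show ?thesis
    using assms by (simp add: pattern_count_def power2_eq_square)
qed

lemma J_eigenvalue_0: "i \<le> k \<Longrightarrow> J_eigenvalue k i 0 = int (k choose i) ^ 2"
  using pattern_count_eq_square[of 0 i 0 k] by (simp add: J_eigenvalue_def)

lemma J_eigenvalue_0_minus_1:
  assumes "1 \<le> i" "i < k"
  shows "J_eigenvalue k i 0 - J_eigenvalue k i 1 = 2 * (int (k choose i) * int ((k - 1) choose i))"
proof -
  have "J_eigenvalue k i 1 = pattern_count k i 1 1 - pattern_count k i 1 0"
    by (simp add: J_eigenvalue_def atMost_Suc)
  also have "\<dots> = int ((k - 1) choose (i - 1)) ^ 2 - int ((k - 1) choose i) ^ 2"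
    using assms pattern_count_eq_square[of 1 i 1 k] pattern_count_eq_square[of 0 i 1 k] by simp
  finally have "J_eigenvalue k i 1 = int ((k - 1) choose (i - 1)) ^ 2 - int ((k - 1) choose i) ^ 2" .
  moreover have "k choose i = ((k - 1) choose (i - 1)) + ((k - 1) choose i)"
    using assms binomial_Suc_Suc[of "k - 1" "i - 1"] by simp
  ultimately show ?thesis
    using J_eigenvalue_0[of i k] assms by (simp add: power2_eq_square algebra_simps)
qed

lemma square_mod_4: "(4::int) dvd int c ^ 2 - of_bool (odd c)"
proof (cases "even c")
  case True
  then obtain a where "c = 2 * a" by blast
  then show ?thesis by (simp add: power2_eq_square)
next
  case False
  then obtain a where "c = 2 * a + 1" by (rule oddE)
  then have "int c ^ 2 - 1 = 4 * (int a ^ 2 + int a)"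
    by (simp add: power2_eq_square algebra_simps)
  then show ?thesis using False by simp
qed

lemma alternating_binomial_sum:
  "1 \<le> j \<Longrightarrow> (\<Sum>t\<le>j. (-1::int) ^ (j - t) * int (j choose t)) = 0"
  using binomial_ring[of "1::int" "-1" j] by (simp add: mult.commute power_0_left)

text \<open>All terms with \<open>t \<ge> 1\<close> are odd squares and the term \<open>t = 0\<close> is an even square, so
  modulo 4 the eigenvalue is the alternating binomial sum without its \<open>t = 0\<close> term.\<close>

lemma J_eigenvalue_mod_4:
  assumes "2 \<le> j" "j \<le> i" "j - 1 \<le> k - i" "i < k"
    and "even ((k - j) choose i)" and "\<forall>t. 1 \<le> t \<and> t \<le> j \<longrightarrow> odd ((k - j) choose (i - t))"
  shows "(4::int) dvd J_eigenvalue k i j + (-1) ^ j"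
proof -
  define d where "d t = pattern_count k i j t - of_bool (0 < t)" for t
  have d: "(4::int) dvd d t" if "t \<le> j" for t
  proof (cases "t = 0 \<and> \<not> j \<le> k - i")
    case True
    then show ?thesis by (simp add: d_def pattern_count_def)
  next
    case False
    then have "pattern_count k i j t = int ((k - j) choose (i - t)) ^ 2"
      using assms that by (intro pattern_count_eq_square) auto
    moreover have "odd ((k - j) choose (i - t)) \<longleftrightarrow> 0 < t"
      using assms that by auto
    ultimately show ?thesis
      using square_mod_4[of "(k - j) choose (i - t)"] by (simp add: d_def)
  qed
  have "(\<Sum>t\<le>j. (-1::int) ^ (j - t) * int (j choose t) * of_bool (0 < t))
      = (\<Sum>t\<le>j. (-1) ^ (j - t) * int (j choose t)) - (-1) ^ j"
    by (simp add: sum.remove[of "{..j}" 0]) (intro sum.cong; auto)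
  then have "J_eigenvalue k i j + (-1) ^ j = (\<Sum>t\<le>j. (-1) ^ (j - t) * int (j choose t) * d t)"
    using alternating_binomial_sum[of j] assms(1)
    by (simp add: J_eigenvalue_def d_def right_diff_distrib sum_subtractf)
  also have "(4::int) dvd \<dots>"
    by (rule dvd_sum) (simp add: d)
  finally show ?thesis .
qed

lemma prod_of_bool:
  "finite A \<Longrightarrow> (\<Prod>x\<in>A. of_bool (P x)) = (of_bool (\<forall>x\<in>A. P x) :: 'a::comm_semiring_1)"
  by (induction A rule: finite_induct) auto

lemma sum_Pow_card:
  "finite A \<Longrightarrow> (\<Sum>S\<in>Pow A. f (card S)) = (\<Sum>t\<le>card A. of_nat (card A choose t) * f t)"
proof -
  assume A: "finite A"
  have "(\<Sum>S\<in>Pow A. f (card S)) = (\<Sum>t\<le>card A. \<Sum>S\<in>{S \<in> Pow A. card S = t}. f (card S))"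
    using A by (intro sum.group[symmetric]) (auto simp: card_mono)
  also have "\<dots> = (\<Sum>t\<le>card A. of_nat (card A choose t) * f t)"
  proof (rule sum.cong[OF refl])
    fix t
    have "(\<Sum>S\<in>{S \<in> Pow A. card S = t}. f (card S)) = (\<Sum>S\<in>{S. S \<subseteq> A \<and> card S = t}. f t)"
      by (rule sum.cong) auto
    then show "(\<Sum>S\<in>{S \<in> Pow A. card S = t}. f (card S)) = of_nat (card A choose t) * f t"
      using n_subsets[OF A, of t] by simp
  qed
  finally show ?thesis .
qed

lemma card_subsets_with_trace:
  assumes "finite X" "finite Y" "X \<inter> Y = {}" "X \<inter> Z = {}" "Y \<inter> Z = {}" "T \<subseteq> Z"
  shows "card {C. C \<subseteq> X \<union> Y \<union> Z \<and> C \<inter> Z = T \<and> card (C \<inter> X) = p \<and> card (C \<inter> Y) = q}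
         = (card X choose p) * (card Y choose q)"
proof -
  let ?Cs = "{C. C \<subseteq> X \<union> Y \<union> Z \<and> C \<inter> Z = T \<and> card (C \<inter> X) = p \<and> card (C \<inter> Y) = q}"
  let ?As = "{A. A \<subseteq> X \<and> card A = p} \<times> {A. A \<subseteq> Y \<and> card A = q}"
  have "bij_betw (\<lambda>C. (C \<inter> X, C \<inter> Y)) ?Cs ?As"
  proof (rule bij_betw_byWitness[where f' = "\<lambda>(A, A'). A \<union> A' \<union> T"])
    have "(A \<union> A' \<union> T) \<inter> X = A" "(A \<union> A' \<union> T) \<inter> Y = A'" "(A \<union> A' \<union> T) \<inter> Z = T"
      if "A \<subseteq> X" "A' \<subseteq> Y" for A A'
      using that assms by auto
    then show "(\<lambda>(A, A'). A \<union> A' \<union> T) ` ?As \<subseteq> ?Cs"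
      using assms by auto
  qed (use assms in auto)
  then show ?thesis
    using assms by (simp add: bij_betw_same_card card_cartesian_product n_subsets)
qed

definition pair_vector :: "(nat \<Rightarrow> nat) \<Rightarrow> (nat \<Rightarrow> nat) \<Rightarrow> nat \<Rightarrow> nat set \<Rightarrow> int" where
  "pair_vector a b j C = (\<Prod>l<j. of_bool (a l \<in> C) - of_bool (b l \<in> C))"

definition pair_pattern :: "(nat \<Rightarrow> nat) \<Rightarrow> (nat \<Rightarrow> nat) \<Rightarrow> nat \<Rightarrow> nat set \<Rightarrow> nat set" where
  "pair_pattern a b j S = a ` S \<union> b ` ({..<j} - S)"

lemma finite_J_vertices: "finite (J_vertices n k)"
  by (rule finite_subset[of _ "Pow {1..n}"]) (auto simp: J_vertices_def)

lemma pair_vector_swap: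
  "pair_vector a b j C = (\<Prod>l<j. if R l then -1 else 1)
     * pair_vector (\<lambda>l. if R l then b l else a l) (\<lambda>l. if R l then a l else b l) j C"
  unfolding pair_vector_def prod.distrib[symmetric] by (rule prod.cong) auto

locale disjoint_pairs =
  fixes a b :: "nat \<Rightarrow> nat" and j :: nat
  assumes inj_a: "inj_on a {..<j}" and inj_b: "inj_on b {..<j}"
    and disjoint: "a ` {..<j} \<inter> b ` {..<j} = {}"
begin

abbreviation points where "points \<equiv> a ` {..<j} \<union> b ` {..<j}"

lemma trace_eq_pair_pattern_iff:
  assumes S: "S \<subseteq> {..<j}"
  shows "C \<inter> points = pair_pattern a b j S \<longleftrightarrow>
    (\<forall>l\<in>S. a l \<in> C \<and> b l \<notin> C) \<and> (\<forall>l\<in>{..<j} - S. b l \<in> C \<and> a l \<notin> C)"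
proof -
  have a: "a l \<in> pair_pattern a b j S \<longleftrightarrow> l \<in> S" and b: "b l \<in> pair_pattern a b j S \<longleftrightarrow> l \<notin> S"
    if "l < j" for l
    using that S disjoint inj_on_image_mem_iff[OF inj_a, of l S] inj_on_image_mem_iff[OF inj_b, of l "{..<j} - S"]
    unfolding pair_pattern_def by auto
  show ?thesis
  proof
    assume trace: "C \<inter> points = pair_pattern a b j S"
    have "x \<in> C \<longleftrightarrow> x \<in> pair_pattern a b j S" if "x \<in> points" for x
      using trace that by blast
    then show "(\<forall>l\<in>S. a l \<in> C \<and> b l \<notin> C) \<and> (\<forall>l\<in>{..<j} - S. b l \<in> C \<and> a l \<notin> C)"
      using S a b by auto
  next
    assume "(\<forall>l\<in>S. a l \<in> C \<and> b l \<notin> C) \<and> (\<forall>l\<in>{..<j} - S. b l \<in> C \<and> a l \<notin> C)"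
    then show "C \<inter> points = pair_pattern a b j S"
      using S unfolding pair_pattern_def by auto
  qed
qed

lemma pair_vector_expansion:
  "pair_vector a b j C =
    (\<Sum>S\<in>Pow {..<j}. (-1) ^ (j - card S) * of_bool (C \<inter> points = pair_pattern a b j S))"
proof -
  have "pair_vector a b j C
      = (\<Prod>l<j. of_bool (a l \<in> C \<and> b l \<notin> C) + - of_bool (b l \<in> C \<and> a l \<notin> C))"
    unfolding pair_vector_def by (rule prod.cong) auto
  also have "\<dots> = (\<Sum>S\<in>Pow {..<j}. (\<Prod>l\<in>S. of_bool (a l \<in> C \<and> b l \<notin> C))
                      * (\<Prod>l\<in>{..<j} - S. - of_bool (b l \<in> C \<and> a l \<notin> C)))"
    by (rule prod_add) simp
  also have "\<dots> = (\<Sum>S\<in>Pow {..<j}. (-1) ^ (j - card S) * of_bool (C \<inter> points = pair_pattern a b j S))"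
  proof (rule sum.cong[OF refl])
    fix S assume "S \<in> Pow {..<j}"
    then have S: "S \<subseteq> {..<j}" "finite S" by (auto intro: finite_subset)
    have "(\<Prod>l\<in>{..<j} - S. - of_bool (b l \<in> C \<and> a l \<notin> C))
        = (-1::int) ^ (j - card S) * of_bool (\<forall>l\<in>{..<j} - S. b l \<in> C \<and> a l \<notin> C)"
      using S by (simp add: prod_uminus prod_of_bool card_Diff_subset)
    then show "(\<Prod>l\<in>S. of_bool (a l \<in> C \<and> b l \<notin> C)) * (\<Prod>l\<in>{..<j} - S. - of_bool (b l \<in> C \<and> a l \<notin> C))
        = (-1::int) ^ (j - card S) * of_bool (C \<inter> points = pair_pattern a b j S)"
      using S by (simp add: prod_of_bool trace_eq_pair_pattern_iff)
  qed
  finally show ?thesis .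
qed

lemma card_pattern_trace:
  assumes U: "finite U" "B \<subseteq> U" and ab: "a ` {..<j} \<subseteq> B" "b ` {..<j} \<subseteq> U - B"
    and S: "S \<subseteq> {..<j}" and C: "C \<subseteq> U" "C \<inter> points = pair_pattern a b j S"
  shows "card (B \<inter> C) = card (C \<inter> (B - points)) + card S"
    and "card C = card (C \<inter> (B - points)) + card (C \<inter> (U - B - points)) + j"
proof -
  have fin: "finite S" "finite (C \<inter> (B - points))" "finite (C \<inter> (U - B - points))"
    using U S finite_subset by (auto intro: finite_subset[of _ U])
  have "a ` S \<subseteq> B"
    using image_mono[OF S, of a] ab(1) by (rule subset_trans)
  then have "B \<inter> pair_pattern a b j S = a ` S"
    using ab(2) unfolding pair_pattern_def by auto
  then have "B \<inter> C = C \<inter> (B - points) \<union> a ` S"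
    using C(2) by blast
  moreover have "C \<inter> (B - points) \<inter> a ` S = {}"
    using image_mono[OF S, of a] by blast
  ultimately show "card (B \<inter> C) = card (C \<inter> (B - points)) + card S"
    using fin card_image[OF inj_on_subset[OF inj_a S]] by (simp add: card_Un_disjoint)
  have "card (pair_pattern a b j S) = card S + (j - card S)"
    unfolding pair_pattern_def
    using fin(1) S disjoint card_image[OF inj_on_subset[OF inj_a S]]
      card_image[OF inj_on_subset[OF inj_b Diff_subset]] card_Diff_subset[OF fin(1) S]
    by (subst card_Un_disjoint) auto
  also have "\<dots> = j"
    using card_mono[OF finite_lessThan S] by simp
  finally have card_T: "card (pair_pattern a b j S) = j" .
  have "C = C \<inter> (B - points) \<union> C \<inter> (U - B - points) \<union> pair_pattern a b j S"
    using C by auto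
  then have "card C = card (C \<inter> (B - points) \<union> C \<inter> (U - B - points) \<union> pair_pattern a b j S)"
    by (rule arg_cong)
  also have "\<dots> = card (C \<inter> (B - points) \<union> C \<inter> (U - B - points)) + card (pair_pattern a b j S)"
    using fin(1-3) C(2) by (intro card_Un_disjoint) (auto simp: pair_pattern_def)
  also have "card (C \<inter> (B - points) \<union> C \<inter> (U - B - points))
      = card (C \<inter> (B - points)) + card (C \<inter> (U - B - points))"
    using fin(2,3) by (intro card_Un_disjoint) auto
  finally show "card C = card (C \<inter> (B - points)) + card (C \<inter> (U - B - points)) + j"
    using card_T by simp
qed

lemma J_pattern_neighbour_iff:
  assumes B: "B \<subseteq> {1..2 * k}" "card B = k"
    and ab: "a ` {..<j} \<subseteq> B" "b ` {..<j} \<subseteq> {1..2 * k} - B"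
    and S: "S \<subseteq> {..<j}"
  shows "C \<in> J_vertices (2 * k) k \<and> card (B \<inter> C) = i \<and> C \<inter> points = pair_pattern a b j S \<longleftrightarrow>
    C \<subseteq> {1..2 * k} \<and> C \<inter> points = pair_pattern a b j S \<and> card S \<le> i \<and> j - card S \<le> k - i
    \<and> card (C \<inter> (B - points)) = i - card S
    \<and> card (C \<inter> ({1..2 * k} - B - points)) = (k - i) - (j - card S)"
proof (cases "C \<subseteq> {1..2 * k} \<and> C \<inter> points = pair_pattern a b j S")
  case True
  then have "card (B \<inter> C) = card (C \<inter> (B - points)) + card S"
    "card C = card (C \<inter> (B - points)) + card (C \<inter> ({1..2 * k} - B - points)) + j"
    using card_pattern_trace[OF finite_atLeastAtMost B(1) ab S] by simp_all
  moreover have "card S \<le> j" "card (B \<inter> C) \<le> k"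
    using card_mono[OF finite_lessThan S] card_mono[OF finite_subset[OF B(1)], of "B \<inter> C"] B(2)
    by simp_all
  ultimately have "card C = k \<and> card (B \<inter> C) = i \<longleftrightarrow>
      card S \<le> i \<and> j - card S \<le> k - i \<and> card (C \<inter> (B - points)) = i - card S
      \<and> card (C \<inter> ({1..2 * k} - B - points)) = (k - i) - (j - card S)"
    by auto
  then show ?thesis
    using True unfolding J_vertices_def by auto
next
  case False
  then show ?thesis
    unfolding J_vertices_def by auto
qed

lemma card_pattern_neighbours:
  assumes B: "B \<subseteq> {1..2 * k}" "card B = k"
    and ab: "a ` {..<j} \<subseteq> B" "b ` {..<j} \<subseteq> {1..2 * k} - B"
    and S: "S \<subseteq> {..<j}"
  shows "int (card {C \<in> J_vertices (2 * k) k. card (B \<inter> C) = i \<and> C \<inter> points = pair_pattern a b j S})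
    = pattern_count k i j (card S)"
proof -
  define X where "X = B - points"
  define Y where "Y = {1..2 * k} - B - points"
  have fin: "finite X" "finite Y"
    using finite_subset[OF B(1)] by (simp_all add: X_def Y_def)
  have disj: "X \<inter> Y = {}" "X \<inter> points = {}" "Y \<inter> points = {}" "pair_pattern a b j S \<subseteq> points"
    using S unfolding X_def Y_def pair_pattern_def by auto
  have U: "{1..2 * k} = X \<union> Y \<union> points"
    using ab B unfolding X_def Y_def by auto
  have "X = B - a ` {..<j}" "Y = ({1..2 * k} - B) - b ` {..<j}"
    using ab by (auto simp: X_def Y_def)
  moreover have "card (a ` {..<j}) = j" "card (b ` {..<j}) = j" "card ({1..2 * k} - B) = k"
    using B card_Diff_subset[OF finite_subset[OF B(1)] B(1)] by (simp_all add: card_image inj_a inj_b)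
  ultimately have cards: "card X = k - j" "card Y = k - j"
    using card_Diff_subset[OF finite_imageI[OF finite_lessThan] ab(1)]
      card_Diff_subset[OF finite_imageI[OF finite_lessThan] ab(2)] B(2) by simp_all
  note iff = J_pattern_neighbour_iff[OF B ab S, folded X_def Y_def, unfolded U]
  show ?thesis
  proof (cases "card S \<le> i \<and> j - card S \<le> k - i")
    case True
    then have "{C \<in> J_vertices (2 * k) k. card (B \<inter> C) = i \<and> C \<inter> points = pair_pattern a b j S}
        = {C. C \<subseteq> X \<union> Y \<union> points \<and> C \<inter> points = pair_pattern a b j S
              \<and> card (C \<inter> X) = i - card S \<and> card (C \<inter> Y) = (k - i) - (j - card S)}"
      using iff by auto
    then show ?thesis
      using True card_subsets_with_trace[OF fin disj] cards by (simp add: pattern_count_def)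
  next
    case False
    then have "{C \<in> J_vertices (2 * k) k. card (B \<inter> C) = i \<and> C \<inter> points = pair_pattern a b j S} = {}"
      using iff by auto
    then have "card {C \<in> J_vertices (2 * k) k. card (B \<inter> C) = i \<and> C \<inter> points = pair_pattern a b j S} = 0"
      by (metis card.empty)
    then show ?thesis
      using False by (auto simp: pattern_count_def)
  qed
qed

lemma J_pair_vector_aligned:
  assumes B: "B \<in> J_vertices (2 * k) k"
    and ab: "a ` {..<j} \<subseteq> B" "b ` {..<j} \<subseteq> {1..2 * k} - B"
  shows "(\<Sum>C\<in>J_vertices (2 * k) k. of_bool (card (B \<inter> C) = i) * pair_vector a b j C)
    = J_eigenvalue k i j"
proof -
  let ?V = "J_vertices (2 * k) k"
  have "(\<Sum>C\<in>?V. of_bool (card (B \<inter> C) = i) * pair_vector a b j C)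
      = (\<Sum>C\<in>?V. \<Sum>S\<in>Pow {..<j}.
           (-1) ^ (j - card S) * of_bool (card (B \<inter> C) = i \<and> C \<inter> points = pair_pattern a b j S))"
    by (intro sum.cong refl)
       (simp add: pair_vector_expansion sum_distrib_left of_bool_conj mult_ac
         del: sum_mult_of_bool_eq sum_of_bool_mult_eq)
  also have "\<dots> = (\<Sum>S\<in>Pow {..<j}. (-1) ^ (j - card S) *
      int (card {C \<in> ?V. card (B \<inter> C) = i \<and> C \<inter> points = pair_pattern a b j S}))"
    by (subst sum.swap) (simp add: sum_distrib_left[symmetric] finite_J_vertices Int_def)
  also have "\<dots> = (\<Sum>S\<in>Pow {..<j}. (-1) ^ (j - card S) * pattern_count k i j (card S))"
    using B card_pattern_neighbours[OF _ _ ab] by (intro sum.cong refl) (simp add: J_vertices_def)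
  also have "\<dots> = J_eigenvalue k i j"
    using sum_Pow_card[of "{..<j}" "\<lambda>t. (-1) ^ (j - t) * pattern_count k i j t"]
    by (simp add: J_eigenvalue_def mult_ac)
  finally show ?thesis .
qed

lemma a_neq_b: "x < j \<Longrightarrow> y < j \<Longrightarrow> a x \<noteq> b y"
  using disjoint by blast

lemma disjoint_pairs_swap:
  "disjoint_pairs (\<lambda>l. if R l then b l else a l) (\<lambda>l. if R l then a l else b l) j"
proof
  show "inj_on (\<lambda>l. if R l then b l else a l) {..<j}" "inj_on (\<lambda>l. if R l then a l else b l) {..<j}"
    using inj_a inj_b a_neq_b by (auto simp: inj_on_def) metis+
  show "(\<lambda>l. if R l then b l else a l) ` {..<j} \<inter> (\<lambda>l. if R l then a l else b l) ` {..<j} = {}"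
    using inj_a inj_b a_neq_b by (auto simp: inj_on_def) metis+
qed

lemma J_pair_vector_transversal:
  assumes B: "B \<in> J_vertices (2 * k) k"
    and ab: "a ` {..<j} \<subseteq> {1..2 * k}" "b ` {..<j} \<subseteq> {1..2 * k}"
    and transversal: "\<forall>l<j. a l \<in> B \<longleftrightarrow> b l \<notin> B"
  shows "(\<Sum>C\<in>J_vertices (2 * k) k. of_bool (card (B \<inter> C) = i) * pair_vector a b j C)
    = J_eigenvalue k i j * pair_vector a b j B"
proof -
  define a' where "a' l = (if b l \<in> B then b l else a l)" for l
  define b' where "b' l = (if b l \<in> B then a l else b l)" for l
  interpret swapped: disjoint_pairs a' b' j
    unfolding a'_def b'_def by (rule disjoint_pairs_swap)
  have "a' l \<in> B" "b' l \<in> {1..2 * k} - B" if "l < j" for l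
    using that transversal ab by (auto simp: a'_def b'_def)
  then have "(\<Sum>C\<in>J_vertices (2 * k) k. of_bool (card (B \<inter> C) = i) * pair_vector a' b' j C)
      = J_eigenvalue k i j" and "pair_vector a' b' j B = 1"
    using swapped.J_pair_vector_aligned[OF B] by (auto simp: pair_vector_def image_subset_iff)
  moreover define s where "s = (\<Prod>l<j. if b l \<in> B then -1 else (1::int))"
  have "pair_vector a b j C = s * pair_vector a' b' j C" for C
    unfolding s_def a'_def b'_def by (rule pair_vector_swap)
  ultimately show ?thesis
    by (simp add: mult.left_commute[of _ s] mult.commute[of _ s] sum_distrib_left[symmetric])
qed

lemma J_pair_vector_degenerate:
  assumes B: "B \<in> J_vertices (2 * k) k"
    and ab: "a ` {..<j} \<subseteq> {1..2 * k}" "b ` {..<j} \<subseteq> {1..2 * k}"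
    and l0: "l0 < j" "a l0 \<in> B \<longleftrightarrow> b l0 \<in> B"
  shows "(\<Sum>C\<in>J_vertices (2 * k) k. of_bool (card (B \<inter> C) = i) * pair_vector a b j C) = 0"
proof -
  let ?V = "J_vertices (2 * k) k" and ?\<tau> = "transpose (a l0) (b l0)"
  let ?f = "\<lambda>C. of_bool (card (B \<inter> C) = i) * pair_vector a b j C"
  have involution: "?\<tau> ` ?\<tau> ` C = C" for C
    by (simp add: image_comp)
  have "a l0 \<in> {1..2 * k}" "b l0 \<in> {1..2 * k}"
    using ab l0 by auto
  then have "?\<tau> ` {1..2 * k} = {1..2 * k}" "?\<tau> ` B = B"
    using l0(2) by simp_all
  have V: "?\<tau> ` C \<in> ?V" if "C \<in> ?V" for C
  proof -
    have "?\<tau> ` C \<subseteq> ?\<tau> ` {1..2 * k}"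
      using that by (auto simp: J_vertices_def)
    then show ?thesis
      using that \<open>?\<tau> ` {1..2 * k} = {1..2 * k}\<close> by (simp add: J_vertices_def card_image)
  qed
  have "B \<inter> ?\<tau> ` C = ?\<tau> ` (B \<inter> C)" for C
    using \<open>?\<tau> ` B = B\<close> by (metis image_Int inj_transpose)
  then have adjacent: "card (B \<inter> ?\<tau> ` C) = card (B \<inter> C)" for C
    by (simp add: card_image)
  have "pair_vector a b j (?\<tau> ` C) = - pair_vector a b j C" for C
  proof -
    have fixed: "?\<tau> (a l) = a l" "?\<tau> (b l) = b l" if "l < j" "l \<noteq> l0" for l
      using that l0 inj_a inj_b
      by (auto intro!: transpose_apply_other dest: inj_onD simp: a_neq_b a_neq_b[THEN not_sym])
    have split: "pair_vector a b j D = (of_bool (a l0 \<in> D) - of_bool (b l0 \<in> D))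
        * (\<Prod>l\<in>{..<j} - {l0}. of_bool (a l \<in> D) - of_bool (b l \<in> D))" for D
      unfolding pair_vector_def using l0(1) by (simp add: prod.remove)
    have "(\<Prod>l\<in>{..<j} - {l0}. of_bool (a l \<in> ?\<tau> ` C) - of_bool (b l \<in> ?\<tau> ` C))
        = (\<Prod>l\<in>{..<j} - {l0}. of_bool (a l \<in> C) - of_bool (b l \<in> C) :: int)"
      by (rule prod.cong) (auto simp: in_transpose_image_iff fixed)
    then show ?thesis
      by (simp add: split[of "?\<tau> ` C"] split[of C] in_transpose_image_iff)
  qed
  then have "sum ?f ?V = sum (\<lambda>C. - ?f C) ?V"
    using V involution adjacent by (intro sum.reindex_bij_witness[of _ "image ?\<tau>" "image ?\<tau>"]) auto
  then show ?thesis
    by (simp add: sum_negf)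
qed

lemma J_pair_vector_eigen:
  assumes B: "B \<in> J_vertices (2 * k) k"
    and ab: "a ` {..<j} \<subseteq> {1..2 * k}" "b ` {..<j} \<subseteq> {1..2 * k}"
  shows "(\<Sum>C\<in>J_vertices (2 * k) k. J_adj i B C * of_int (pair_vector a b j C))
    = of_int (J_eigenvalue k i j) * of_int (pair_vector a b j B)"
proof -
  have "(\<Sum>C\<in>J_vertices (2 * k) k. of_bool (card (B \<inter> C) = i) * pair_vector a b j C)
      = J_eigenvalue k i j * pair_vector a b j B"
  proof (cases "\<exists>l<j. a l \<in> B \<longleftrightarrow> b l \<in> B")
    case True
    then obtain l0 where "l0 < j" "a l0 \<in> B \<longleftrightarrow> b l0 \<in> B"
      by blast
    moreover from this have "pair_vector a b j B = 0"
      unfolding pair_vector_def by (intro prod_zero) auto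
    ultimately show ?thesis
      using J_pair_vector_degenerate[OF B ab] by simp
  next
    case False
    then show ?thesis
      using J_pair_vector_transversal[OF B ab] by blast
  qed
  then have "of_int (\<Sum>C\<in>J_vertices (2 * k) k. of_bool (card (B \<inter> C) = i) * pair_vector a b j C)
      = (of_int (J_eigenvalue k i j * pair_vector a b j B) :: complex)"
    by simp
  moreover have "J_adj i B C = of_bool (card (B \<inter> C) = i)" for C
    by (simp add: J_adj_def)
  ultimately show ?thesis
    by (simp only: of_int_sum of_int_mult of_int_of_bool)
qed

end

section \<open>Perfect state transfer in \<open>J(2k, k, i)\<close>\<close>

lemma real_sym_matrix_J: "real_sym_matrix (J_vertices n k) (J_adj i)"
  by unfold_locales (auto simp: finite_J_vertices J_adj_def Int_commute)

lemma J_perfect_transfer_pair_vector: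
  assumes "disjoint_pairs a b j"
    and u: "u \<in> J_vertices (2 * k) k" and v: "v \<in> J_vertices (2 * k) k"
    and unit: "cmod (transition (J_vertices (2 * k) k) (J_adj i) \<tau> u v) = 1"
    and ab: "a ` {..<j} \<subseteq> u" "b ` {..<j} \<subseteq> {1..2 * k} - u"
  shows "transition (J_vertices (2 * k) k) (J_adj i) \<tau> u v * of_int (pair_vector a b j v)
    = exp (\<i> * complex_of_real \<tau> * of_int (J_eigenvalue k i j))"
proof -
  interpret disjoint_pairs a b j by fact
  interpret real_sym_matrix "J_vertices (2 * k) k" "J_adj i" by (rule real_sym_matrix_J)
  have "a ` {..<j} \<subseteq> {1..2 * k}" "b ` {..<j} \<subseteq> {1..2 * k}"
    using ab u by (auto simp: J_vertices_def)
  then have "transition (J_vertices (2 * k) k) (J_adj i) \<tau> u v * of_int (pair_vector a b j v)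
      = exp (\<i> * complex_of_real \<tau> * of_int (J_eigenvalue k i j)) * of_int (pair_vector a b j u)"
    by (intro perfect_transfer_eigenvector u v unit J_pair_vector_eigen)
  moreover have "pair_vector a b j u = 1"
    using ab unfolding pair_vector_def by (intro prod.neutral) (auto simp: image_subset_iff)
  ultimately show ?thesis
    by simp
qed

lemma exists_disjoint_pairs:
  assumes u: "u \<in> J_vertices (2 * k) k" and "j \<le> k"
  obtains a b where "disjoint_pairs a b j" "a ` {..<j} \<subseteq> u" "b ` {..<j} \<subseteq> {1..2 * k} - u"
proof -
  have fin: "finite u" "finite ({1..2 * k} - u)" and card: "card u = k" "card ({1..2 * k} - u) = k"
    using u finite_subset[of u "{1..2 * k}"] card_Diff_subset[of u "{1..2 * k}"]
    by (auto simp: J_vertices_def)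
  obtain f where f: "bij_betw f {0..<k} u"
    using ex_bij_betw_nat_finite[OF fin(1)] card by auto
  obtain g where g: "bij_betw g {0..<k} ({1..2 * k} - u)"
    using ex_bij_betw_nat_finite[OF fin(2)] card by auto
  have sub: "{..<j} \<subseteq> {0..<k}"
    using \<open>j \<le> k\<close> by auto
  have "f ` {..<j} \<subseteq> u" "g ` {..<j} \<subseteq> {1..2 * k} - u"
    using image_mono[OF sub, of f] image_mono[OF sub, of g]
      bij_betw_imp_surj_on[OF f] bij_betw_imp_surj_on[OF g] by simp_all
  moreover have "disjoint_pairs f g j"
  proof
    show "inj_on f {..<j}" "inj_on g {..<j}"
      using inj_on_subset[OF bij_betw_imp_inj_on[OF f] sub] inj_on_subset[OF bij_betw_imp_inj_on[OF g] sub]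
      by simp_all
    show "f ` {..<j} \<inter> g ` {..<j} = {}"
      using calculation by auto
  qed
  ultimately show ?thesis
    using that by blast
qed

lemma disjoint_pairs_single: "a \<noteq> b \<Longrightarrow> disjoint_pairs (\<lambda>_. a) (\<lambda>_. b) 1"
  by unfold_locales (auto simp: inj_on_def)

text \<open>With \<open>j = 1\<close> the amplitude times \<open>[a \<in> v] - [b \<in> v]\<close> is the same for all \<open>a \<in> u\<close>,
  \<open>b \<notin> u\<close>; choosing \<open>a \<in> u - v\<close> and \<open>b \<in> v - u\<close> shows it is always \<open>-1\<close>.\<close>

lemma J_perfect_transfer_complement:
  assumes u: "u \<in> J_vertices (2 * k) k" and v: "v \<in> J_vertices (2 * k) k" and "u \<noteq> v"
    and unit: "cmod (transition (J_vertices (2 * k) k) (J_adj i) \<tau> u v) = 1"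
  shows "v = {1..2 * k} - u"
proof -
  let ?\<gamma> = "transition (J_vertices (2 * k) k) (J_adj i) \<tau> u v"
  have phase: "?\<gamma> * of_int (of_bool (a \<in> v) - of_bool (b \<in> v))
      = exp (\<i> * complex_of_real \<tau> * of_int (J_eigenvalue k i 1))"
    if "a \<in> u" "b \<in> {1..2 * k} - u" for a b
  proof -
    have "a \<noteq> b" "(\<lambda>_. a) ` {..<1} \<subseteq> u" "(\<lambda>_. b) ` {..<1} \<subseteq> {1..2 * k} - u"
      using that by auto
    from J_perfect_transfer_pair_vector[OF disjoint_pairs_single[OF this(1)] u v unit this(2,3)]
    show ?thesis
      by (simp add: pair_vector_def)
  qed
  have fin: "finite u" "finite v" and card: "card u = card v"
    using u v finite_subset[of _ "{1..2 * k}"] by (auto simp: J_vertices_def)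
  obtain a0 where a0: "a0 \<in> u" "a0 \<notin> v"
    using card_subset_eq[OF fin(2), of u] card \<open>u \<noteq> v\<close> by blast
  obtain b0 where b0: "b0 \<in> v" "b0 \<notin> u"
    using card_subset_eq[OF fin(1), of v] card \<open>u \<noteq> v\<close> by (metis subsetI)
  have "b0 \<in> {1..2 * k}"
    using v b0 by (auto simp: J_vertices_def)
  have "?\<gamma> \<noteq> 0"
    using unit by auto
  have "of_bool (a \<in> v) - of_bool (b \<in> v) = (-1 :: int)" if "a \<in> u" "b \<in> {1..2 * k} - u" for a b
  proof -
    have "?\<gamma> * of_int (of_bool (a \<in> v) - of_bool (b \<in> v)) = ?\<gamma> * of_int (-1)"
      using phase[OF that] phase[of a0 b0] a0 b0 \<open>b0 \<in> {1..2 * k}\<close> by simp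
    then show ?thesis
      using \<open>?\<gamma> \<noteq> 0\<close> by (metis mult_left_cancel of_int_eq_iff)
  qed
  then have "u \<inter> v = {}" "{1..2 * k} - u \<subseteq> v"
    using a0 \<open>b0 \<in> {1..2 * k}\<close> b0 by (fastforce split: if_splits)+
  then show ?thesis
    using v by (auto simp: J_vertices_def)
qed

lemma J_perfect_transfer_phase:
  assumes u: "u \<in> J_vertices (2 * k) k" and v: "v \<in> J_vertices (2 * k) k" and "u \<noteq> v"
    and unit: "cmod (transition (J_vertices (2 * k) k) (J_adj i) \<tau> u v) = 1"
    and "j \<le> k"
  shows "exp (\<i> * complex_of_real (\<tau> * of_int (J_eigenvalue k i 0 - J_eigenvalue k i j))) = (-1) ^ j"
proof -
  let ?\<gamma> = "transition (J_vertices (2 * k) k) (J_adj i) \<tau> u v"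
  have v_eq: "v = {1..2 * k} - u"
    by (rule J_perfect_transfer_complement[OF u v \<open>u \<noteq> v\<close> unit])
  obtain a b where ab: "disjoint_pairs a b j" "a ` {..<j} \<subseteq> u" "b ` {..<j} \<subseteq> {1..2 * k} - u"
    using exists_disjoint_pairs[OF u \<open>j \<le> k\<close>] by blast
  obtain a' b' where ab': "disjoint_pairs a' b' 0" "a' ` {..<0} \<subseteq> u" "b' ` {..<0} \<subseteq> {1..2 * k} - u"
    using exists_disjoint_pairs[OF u] by blast
  have "pair_vector a b j v = (-1) ^ j"
    using ab(2,3) unfolding v_eq pair_vector_def by (auto simp: image_subset_iff)
  then have ej: "?\<gamma> * (-1) ^ j = exp (\<i> * complex_of_real \<tau> * of_int (J_eigenvalue k i j))"
    using J_perfect_transfer_pair_vector[OF ab(1) u v unit ab(2,3)] by simp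
  have e0: "?\<gamma> = exp (\<i> * complex_of_real \<tau> * of_int (J_eigenvalue k i 0))"
    using J_perfect_transfer_pair_vector[OF ab'(1) u v unit ab'(2,3)] by (simp add: pair_vector_def)
  have "exp (\<i> * complex_of_real \<tau> * of_int (J_eigenvalue k i 0))
      / exp (\<i> * complex_of_real \<tau> * of_int (J_eigenvalue k i j)) = ?\<gamma> / (?\<gamma> * (-1) ^ j)"
    by (simp only: e0[symmetric] ej[symmetric])
  also have "\<dots> = (-1) ^ j"
    using e0 by (cases "even j") simp_all
  finally show ?thesis
    by (simp add: exp_diff[symmetric] algebra_simps)
qed

lemma exp_i_eq_neg_one_power:
  assumes "exp (\<i> * complex_of_real x) = (-1) ^ j"
  obtains n :: int where "x = of_int n * pi" "even n \<longleftrightarrow> even j"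
proof -
  have "cos x = (-1) ^ j" "sin x = 0"
    using arg_cong[OF assms, of Re] arg_cong[OF assms, of Im]
    by (cases "even j"; simp add: Re_exp Im_exp)+
  moreover obtain n :: int where "x = of_int n * pi"
    using calculation(2) sin_zero_iff_int2 by blast
  ultimately show ?thesis
    using that cos_npi_int[of n] by (cases "even j") (auto simp: mult.commute split: if_splits)
qed

lemma exp_phase_parity:
  fixes \<tau> :: real and m q :: int
  assumes "exp (\<i> * complex_of_real (\<tau> * of_int (2 * m))) = -1" "odd m"
    and "exp (\<i> * complex_of_real (\<tau> * of_int q)) = (-1) ^ j"
  shows "4 dvd q \<longleftrightarrow> even j"
proof -
  obtain n1 :: int where n1: "\<tau> * of_int (2 * m) = of_int n1 * pi" "odd n1"
    using exp_i_eq_neg_one_power[of _ 1] assms(1) by (metis power_one_right odd_one)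
  obtain n2 :: int where n2: "\<tau> * of_int q = of_int n2 * pi" "even n2 \<longleftrightarrow> even j"
    using exp_i_eq_neg_one_power assms(3) by metis
  have "of_int (n1 * q) * pi = \<tau> * of_int (2 * m) * of_int q"
    using n1(1) by simp
  also have "\<dots> = of_int (2 * m) * (\<tau> * of_int q)"
    by (simp only: ac_simps)
  also have "\<dots> = of_int (2 * m * n2) * pi"
    using n2(1) by simp
  finally have eq: "n1 * q = 2 * m * n2"
    by (metis mult_cancel_right pi_neq_zero of_int_eq_iff)
  then obtain q' where q: "q = 2 * q'"
    using n1(2) by (metis dvd_triv_left even_mult_iff evenE)
  then have "n1 * q' = m * n2"
    using eq by simp
  then have "even q' \<longleftrightarrow> even n2"
    using n1(2) assms(2) by (metis even_mult_iff)
  then show ?thesis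
    using n2(2) q by auto
qed

lemma J_perfect_transfer_eigenvalue_parity:
  assumes u: "u \<in> J_vertices (2 * k) k" and v: "v \<in> J_vertices (2 * k) k" and "u \<noteq> v"
    and unit: "cmod (transition (J_vertices (2 * k) k) (J_adj i) \<tau> u v) = 1"
    and i: "1 \<le> i" "i < k" and odd: "odd (k choose i)" "odd ((k - 1) choose i)" and "j \<le> k"
  shows "4 dvd J_eigenvalue k i 0 - J_eigenvalue k i j \<longleftrightarrow> even j"
proof -
  have "exp (\<i> * complex_of_real (\<tau> * of_int (J_eigenvalue k i 0 - J_eigenvalue k i 1))) = -1"
    using J_perfect_transfer_phase[OF u v \<open>u \<noteq> v\<close> unit, of 1] i by simp
  then have phase_1:
    "exp (\<i> * complex_of_real (\<tau> * of_int (2 * (int (k choose i) * int ((k - 1) choose i))))) = -1"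
    by (simp only: J_eigenvalue_0_minus_1[OF i])
  have "odd (int (k choose i) * int ((k - 1) choose i))"
    using odd by simp
  then show ?thesis
    by (rule exp_phase_parity[OF phase_1 _ J_perfect_transfer_phase[OF u v \<open>u \<noteq> v\<close> unit \<open>j \<le> k\<close>]])
qed

lemma four_dvd_diff_iff_odd:
  fixes x y :: int
  assumes x: "4 dvd x - 1" and y: "4 dvd y + (-1) ^ j"
  shows "4 dvd x - y \<longleftrightarrow> odd j"
proof (cases "even j")
  case True
  then have "4 dvd y + 1"
    using y by simp
  have "\<not> 4 dvd x - y"
  proof
    assume "4 dvd x - y"
    from dvd_diff[OF dvd_diff[OF x this] \<open>4 dvd y + 1\<close>] show False
      by simp
  qed
  with True show ?thesis
    by simp
next
  case False
  then have "4 dvd y - 1"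
    using y by simp
  from dvd_diff[OF x this] False show ?thesis
    by simp
qed

theorem mainTheorem14:
  fixes k i :: nat
  assumes "k \<ge> 2" and "1 \<le> i" and "i \<le> k - 1"
    and "odd (k choose i)" and "odd ((k - 1) choose i)"
  shows "\<not> admits_PST (J_vertices (2 * k) k) (J_adj i)"
proof
  assume "admits_PST (J_vertices (2 * k) k) (J_adj i)"
  then obtain u v \<tau> where uv: "u \<in> J_vertices (2 * k) k" "v \<in> J_vertices (2 * k) k" "u \<noteq> v"
    and unit: "cmod (transition (J_vertices (2 * k) k) (J_adj i) \<tau> u v) = 1"
    unfolding admits_PST_def by blast
  have "i < k"
    using assms(1,3) by linarith
  obtain j where j: "2 \<le> j" "j \<le> i" "j - 1 \<le> k - i" "even ((k - j) choose i)"
    "\<forall>t. 1 \<le> t \<and> t \<le> j \<longrightarrow> odd ((k - j) choose (i - t))"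
    using binomial_parity_witness[OF assms(2) \<open>i < k\<close> assms(4,5)] by blast
  have "4 dvd J_eigenvalue k i 0 - J_eigenvalue k i j \<longleftrightarrow> even j"
    using J_perfect_transfer_eigenvalue_parity[OF uv unit assms(2) \<open>i < k\<close> assms(4,5)] j(2) \<open>i < k\<close>
    by simp
  moreover have "4 dvd J_eigenvalue k i 0 - 1"
    using J_eigenvalue_0[of i k] square_mod_4[of "k choose i"] assms(4) \<open>i < k\<close> by simp
  then have "4 dvd J_eigenvalue k i 0 - J_eigenvalue k i j \<longleftrightarrow> odd j"
    by (rule four_dvd_diff_iff_odd[OF _ J_eigenvalue_mod_4[OF j(1-3) \<open>i < k\<close> j(4,5)]])
  ultimately show False
    by simp
qed

end
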